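(* Let $K$ be a field and let $R\in\mathfrak R_K$ be of Loewy length $\sigma+1$ and top layer dimension $n$. Then there is a $K$-algebra direct product decomposition $R=R_0\boxplus\cdots\boxplus R_{n-1}$ where for each $i<n$, $R_i\in\mathfrak R_K$ has Loewy length $\sigma+1$ and top layer dimension $1$.
   Context: Socle sequence of a ring: $S_0=0$, $S_{\alpha+1}/S_\alpha=\mathrm{Soc}(R/S_\alpha)$, unions at limits; semiartinian with Loewy length $\sigma+1$ means $S_{\sigma+1}=R$ and $S_\sigma\neq R$; layers $L_\alpha=S_{\alpha+1}/S_\alpha$. $K^{(\lambda)}$ is the direct sum of $\lambda$ copies of $K$ as a $K$-algebra without unit. $\mathfrak R_K$ is the class of commutative von Neumann regular semiartinian $K$-algebras $R$ of Loewy length $\sigma+1$ such that for each $\alpha\le\sigma$ there is a cardinal $\lambda_\alpha>0$ and a $K$-linear isomorphism of $K$-algebras without unit $L_\alpha\cong K^{(\lambda_\alpha)}$; the finite number $\lambda_\sigma$ is the top layer dimension. $\boxplus$ denotes ring direct product. *)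

theory Defs
  imports Main
begin

text \<open>A (unital, commutative) ring is a carrier A :: 'a set closed under the ring
  operations of 'a, with its own unit u.  A K-algebra structure is given by a
  ring homomorphism phi : K -> 'a, the scalar action on A being k.x = phi k * x.\<close>

definition ring_hom_K :: "('k::field \<Rightarrow> 'a::comm_ring_1) \<Rightarrow> bool" where
  "ring_hom_K phi \<longleftrightarrow> (\<forall>k l. phi (k + l) = phi k + phi l) \<and>
     (\<forall>k l. phi (k * l) = phi k * phi l) \<and> phi 1 = 1"

definition unital_K_subalgebra ::
  "('k::field \<Rightarrow> 'a::comm_ring_1) \<Rightarrow> 'a set \<Rightarrow> 'a \<Rightarrow> bool" where
  "unital_K_subalgebra phi A u \<longleftrightarrow> 0 \<in> A \<and> u \<in> A \<and>
     (\<forall>x\<in>A. \<forall>y\<in>A. x + y \<in> A \<and> x * y \<in> A) \<and> (\<forall>x\<in>A. - x \<in> A) \<and>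
     (\<forall>x\<in>A. u * x = x) \<and> (\<forall>k. \<forall>x\<in>A. phi k * x \<in> A)"

definition ideal_in :: "'a::comm_ring_1 set \<Rightarrow> 'a set \<Rightarrow> bool" where
  "ideal_in A I \<longleftrightarrow> I \<subseteq> A \<and> 0 \<in> I \<and> (\<forall>x\<in>I. \<forall>y\<in>I. x + y \<in> I) \<and>
     (\<forall>x\<in>I. - x \<in> I) \<and> (\<forall>a\<in>A. \<forall>x\<in>I. a * x \<in> I)"

text \<open>J/I is a minimal (nonzero) ideal, i.e. a simple submodule, of A/I.\<close>
definition minimal_over :: "'a::comm_ring_1 set \<Rightarrow> 'a set \<Rightarrow> 'a set \<Rightarrow> bool" where
  "minimal_over A I J \<longleftrightarrow> ideal_in A J \<and> I \<subset> J \<and>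
     (\<forall>J'. ideal_in A J' \<and> I \<subset> J' \<and> J' \<subseteq> J \<longrightarrow> J' = J)"

text \<open>Preimage in A of Soc(A/I): the ideal generated by I and all J with J/I simple.\<close>
definition soc_succ :: "'a::comm_ring_1 set \<Rightarrow> 'a set \<Rightarrow> 'a set" where
  "soc_succ A I = \<Inter>{J'. ideal_in A J' \<and> I \<subseteq> J' \<and> (\<forall>J. minimal_over A I J \<longrightarrow> J \<subseteq> J')}"

text \<open>The members of the socle sequence S_alpha (alpha ranging over all ordinals):
  the smallest family containing 0 = S_0, closed under S |-> S_{+1}
  and under unions (limit steps).\<close>
inductive_set socle_ideals :: "'a::comm_ring_1 set \<Rightarrow> 'a set set" for A where
  succ: "I \<in> socle_ideals A \<Longrightarrow> soc_succ A I \<in> socle_ideals A"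
| lim: "(\<forall>I\<in>C. I \<in> socle_ideals A) \<Longrightarrow> {0} \<union> \<Union>C \<in> socle_ideals A"

definition fin_fun :: "'a set \<Rightarrow> ('a \<Rightarrow> 'k::field) set" where
  "fin_fun Lam = {f. (\<forall>x. x \<notin> Lam \<longrightarrow> f x = 0) \<and> finite {x. f x \<noteq> 0}}"

text \<open>J/I is isomorphic, as a K-algebra without unit, to K^(Lambda):
  there is a surjective K-linear multiplicative additive map J -> K^(Lambda)
  with kernel I (first isomorphism theorem form).\<close>
definition layer_iso ::
  "('k::field \<Rightarrow> 'a::comm_ring_1) \<Rightarrow> 'a set \<Rightarrow> 'a set \<Rightarrow> 'a set \<Rightarrow> bool" where
  "layer_iso phi I J Lam \<longleftrightarrow> (\<exists>g :: 'a \<Rightarrow> 'a \<Rightarrow> 'k.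
     g ` J = fin_fun Lam \<and>
     (\<forall>x\<in>J. \<forall>y\<in>J. g (x + y) = (\<lambda>i. g x i + g y i) \<and> g (x * y) = (\<lambda>i. g x i * g y i)) \<and>
     (\<forall>k. \<forall>x\<in>J. g (phi k * x) = (\<lambda>i. k * g x i)) \<and>
     {x\<in>J. g x = (\<lambda>i. 0)} = I)"

definition in_RK :: "('k::field \<Rightarrow> 'a::comm_ring_1) \<Rightarrow> 'a set \<Rightarrow> 'a \<Rightarrow> bool" where
  "in_RK phi A u \<longleftrightarrow> unital_K_subalgebra phi A u \<and>
     (\<forall>a\<in>A. \<exists>x\<in>A. a * x * a = a) \<and>
     A \<in> socle_ideals A \<and>
     (\<exists>I\<in>socle_ideals A. I \<noteq> A \<and> soc_succ A I = A) \<and>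
     (\<forall>I\<in>socle_ideals A. I \<noteq> A \<longrightarrow>
        (\<exists>Lam. Lam \<noteq> {} \<and> layer_iso phi I (soc_succ A I) Lam))"

text \<open>Top layer dimension: L_sigma = A/S_sigma is isomorphic to K^n.\<close>
definition top_dim :: "('k::field \<Rightarrow> 'a::comm_ring_1) \<Rightarrow> 'a set \<Rightarrow> nat \<Rightarrow> bool" where
  "top_dim phi A n \<longleftrightarrow> (\<exists>I\<in>socle_ideals A. I \<noteq> A \<and> soc_succ A I = A \<and>
     (\<exists>Lam. finite Lam \<and> card Lam = n \<and> layer_iso phi I A Lam))"

text \<open>Equal Loewy length: the socle sequences (S_alpha, alpha <= sigma+1) of A and B
  are order isomorphic.\<close>
definition same_loewy_length :: "'a::comm_ring_1 set \<Rightarrow> 'a set \<Rightarrow> bool" where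
  "same_loewy_length A B \<longleftrightarrow> (\<exists>f. bij_betw f (socle_ideals A) (socle_ideals B) \<and>
     (\<forall>I\<in>socle_ideals A. \<forall>J\<in>socle_ideals A. I \<subseteq> J \<longleftrightarrow> f I \<subseteq> f J))"

end

theory Submission
  imports Defs "HOL-Library.Indicator_Function"
begin

text \<open>Since R is von Neumann regular, the n coordinate idempotents of the top layer
  R/S_\<sigma> \<cong> K^n lift to idempotents of R, and these can be orthogonalised so that they
  sum to 1; this is the decomposition R = e_0 R \<times> \<dots> \<times> e_(n-1) R.
  For an idempotent e, the socle sequence of the corner eR is the trace S_\<alpha> \<inter> eR of the
  socle sequence of R, because minimal ideals over I \<inter> eR in eR and minimal ideals over I
  in R correspond via J \<mapsto> J + I and J \<mapsto> J \<inter> eR; the layers of eR are restrictions of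
  those of R and hence again of the form K^(\<Lambda>).  If e lies outside S_\<sigma>, no layer of R
  vanishes on eR, so \<alpha> \<mapsto> S_\<alpha> \<inter> eR is an order isomorphism, and the top layer of eR is
  the single coordinate of K^n selected by e.\<close>

section \<open>The socle sequence is a well-ordered chain\<close>

text \<open>The usual tower argument: call X closed if the successor of every smaller member
  of the sequence stays below X; every member is comparable with the successor of a closed
  one, and every member is closed.\<close>

lemma subset_soc_succ: "I \<subseteq> soc_succ A I"
  by (auto simp: soc_succ_def)

lemma soc_succ_least:
  assumes "ideal_in A J'" "I \<subseteq> J'" "\<And>J. minimal_over A I J \<Longrightarrow> J \<subseteq> J'"
  shows "soc_succ A I \<subseteq> J'"
  unfolding soc_succ_def using assms by (intro Inter_lower) blast

lemma minimal_overD: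
  assumes "minimal_over A I J"
  shows "ideal_in A J" "I \<subset> J" "\<And>J'. ideal_in A J' \<Longrightarrow> I \<subset> J' \<Longrightarrow> J' \<subseteq> J \<Longrightarrow> J' = J"
  using assms unfolding minimal_over_def by blast+

lemma minimal_over_subset_soc_succ: "minimal_over A I J \<Longrightarrow> J \<subseteq> soc_succ A I"
  unfolding soc_succ_def by blast

lemma zero_in_socle_ideal: "X \<in> socle_ideals A \<Longrightarrow> (0::'a::comm_ring_1) \<in> X"
  by (induction rule: socle_ideals.induct) (use subset_soc_succ in auto)

lemma socle_ideal_below_or_above_succ_if_closed:
  fixes A :: "'a::comm_ring_1 set"
  assumes X: "X \<in> socle_ideals A"
    and closed: "\<forall>Y\<in>socle_ideals A. Y \<subset> X \<longrightarrow> soc_succ A Y \<subseteq> X"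
  shows "Y \<in> socle_ideals A \<Longrightarrow> Y \<subseteq> X \<or> soc_succ A X \<subseteq> Y"
proof (induction Y rule: socle_ideals.induct)
  case (succ Z)
  from succ.IH show ?case
  proof
    assume "Z \<subseteq> X"
    then consider "Z \<subset> X" | "Z = X" by blast
    then show ?thesis using closed succ.hyps by cases auto
  next
    assume "soc_succ A X \<subseteq> Z"
    then show ?thesis using subset_soc_succ[of Z A] by auto
  qed
next
  case (lim C)
  show ?case
  proof (cases "\<forall>Z\<in>C. Z \<subseteq> X")
    case True
    then show ?thesis using zero_in_socle_ideal[OF X] by auto
  next
    case False
    with lim.IH show ?thesis by blast
  qed
qed

lemma socle_ideal_succ_closed:
  fixes A :: "'a::comm_ring_1 set"
  shows "X \<in> socle_ideals A \<Longrightarrow> \<forall>Y\<in>socle_ideals A. Y \<subset> X \<longrightarrow> soc_succ A Y \<subseteq> X"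
proof (induction X rule: socle_ideals.induct)
  case (succ Z)
  show ?case
  proof (intro ballI impI)
    fix Y assume Y: "Y \<in> socle_ideals A" "Y \<subset> soc_succ A Z"
    with socle_ideal_below_or_above_succ_if_closed[OF succ.hyps succ.IH Y(1)]
    consider "Y \<subset> Z" | "Y = Z" by blast
    then show "soc_succ A Y \<subseteq> soc_succ A Z"
      using succ.IH Y(1) subset_soc_succ[of Z A] by cases auto
  qed
next
  case (lim C)
  show ?case
  proof (intro ballI impI)
    fix Y assume Y: "Y \<in> socle_ideals A" "Y \<subset> {0} \<union> \<Union>C"
    show "soc_succ A Y \<subseteq> {0} \<union> \<Union>C"
    proof (cases "\<exists>Z\<in>C. Y \<subset> Z")
      case True
      with lim.IH Y(1) show ?thesis by blast
    next
      case False
      have "Z \<subseteq> Y" if Z: "Z \<in> C" for Z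
      proof -
        from Z lim.IH have "Z \<in> socle_ideals A"
          and "\<forall>Y\<in>socle_ideals A. Y \<subset> Z \<longrightarrow> soc_succ A Y \<subseteq> Z" by auto
        from socle_ideal_below_or_above_succ_if_closed[OF this Y(1)]
        show "Z \<subseteq> Y" using False Z subset_soc_succ[of Z A] by auto
      qed
      with zero_in_socle_ideal[OF Y(1)] Y(2) show ?thesis by auto
    qed
  qed
qed

lemma socle_ideal_below_or_above_succ:
  fixes A :: "'a::comm_ring_1 set"
  assumes "X \<in> socle_ideals A" "Y \<in> socle_ideals A"
  shows "Y \<subseteq> X \<or> soc_succ A X \<subseteq> Y"
  using socle_ideal_below_or_above_succ_if_closed[OF assms(1)
      socle_ideal_succ_closed[OF assms(1)] assms(2)] .

lemma socle_ideals_chain: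
  fixes A :: "'a::comm_ring_1 set"
  assumes "X \<in> socle_ideals A" "Y \<in> socle_ideals A"
  shows "Y \<subseteq> X \<or> X \<subseteq> Y"
  using socle_ideal_below_or_above_succ[OF assms] subset_soc_succ[of X A] by auto

lemma socle_ideal_subset_top:
  fixes I0 :: "'a::comm_ring_1 set"
  assumes "I0 \<in> socle_ideals UNIV" "soc_succ UNIV I0 = UNIV"
    and "J \<in> socle_ideals UNIV" "J \<noteq> UNIV"
  shows "J \<subseteq> I0"
  using socle_ideal_below_or_above_succ[OF assms(1,3)] assms(2,4) by auto

section \<open>Ideals\<close>

lemma ideal_in_zero: "ideal_in A I \<Longrightarrow> 0 \<in> I"
  by (simp add: ideal_in_def)

lemma ideal_in_add: "ideal_in A I \<Longrightarrow> x \<in> I \<Longrightarrow> y \<in> I \<Longrightarrow> x + y \<in> I"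
  by (simp add: ideal_in_def)

lemma ideal_in_uminus: "ideal_in A I \<Longrightarrow> x \<in> I \<Longrightarrow> - x \<in> I"
  by (simp add: ideal_in_def)

lemma ideal_in_diff: "ideal_in A I \<Longrightarrow> x \<in> I \<Longrightarrow> y \<in> I \<Longrightarrow> x - y \<in> I"
  using ideal_in_add[of A I x "- y"] ideal_in_uminus[of A I y] by simp

lemma ideal_in_mult: "ideal_in A I \<Longrightarrow> a \<in> A \<Longrightarrow> x \<in> I \<Longrightarrow> a * x \<in> I"
  by (simp add: ideal_in_def)

lemma ideal_in_subset: "ideal_in A I \<Longrightarrow> I \<subseteq> A"
  by (simp add: ideal_in_def)

lemma ideal_in_Inter:
  assumes "\<forall>J\<in>F. ideal_in A J" "A \<in> F"
  shows "ideal_in A (\<Inter>F)"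
  unfolding ideal_in_def
proof (intro conjI ballI)
  show "\<Inter>F \<subseteq> A" using assms(2) by auto
  show "0 \<in> \<Inter>F" using assms(1) unfolding ideal_in_def by auto
  fix x assume x: "x \<in> \<Inter>F"
  show "- x \<in> \<Inter>F" using assms(1) x unfolding ideal_in_def by auto
  show "a * x \<in> \<Inter>F" if "a \<in> A" for a
    using assms(1) x that unfolding ideal_in_def by auto
  show "x + y \<in> \<Inter>F" if "y \<in> \<Inter>F" for y
    using assms(1) x that unfolding ideal_in_def by auto
qed

lemma ideal_in_soc_succ:
  assumes "ideal_in A A" "I \<subseteq> A"
  shows "ideal_in A (soc_succ A I)"
proof -
  have "A \<in> {J'. ideal_in A J' \<and> I \<subseteq> J' \<and> (\<forall>J. minimal_over A I J \<longrightarrow> J \<subseteq> J')}"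
    using assms by (auto simp: minimal_over_def ideal_in_def)
  then show ?thesis
    unfolding soc_succ_def by (rule ideal_in_Inter[rotated]) blast
qed

lemma ideal_in_UNIV_soc_succ: "ideal_in UNIV (soc_succ UNIV I)"
  by (rule ideal_in_soc_succ) (simp_all add: ideal_in_def)

lemma ideal_in_chain_Union:
  fixes C :: "'a::comm_ring_1 set set"
  assumes "\<forall>Z\<in>C. ideal_in UNIV Z" "\<forall>Z1\<in>C. \<forall>Z2\<in>C. Z1 \<subseteq> Z2 \<or> Z2 \<subseteq> Z1"
  shows "ideal_in UNIV ({0} \<union> \<Union>C)"
  unfolding ideal_in_def
proof (intro conjI ballI)
  fix x y assume x: "x \<in> {0} \<union> \<Union>C" and y: "y \<in> {0} \<union> \<Union>C"
  show "x + y \<in> {0} \<union> \<Union>C"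
  proof (cases "x = 0 \<or> y = 0")
    case True
    then show ?thesis using x y by auto
  next
    case False
    then obtain Z1 Z2 where Z: "Z1 \<in> C" "Z2 \<in> C" "x \<in> Z1" "y \<in> Z2" using x y by auto
    from assms(2) Z(1,2) have "Z1 \<subseteq> Z2 \<or> Z2 \<subseteq> Z1" by blast
    with Z obtain Z where "Z \<in> C" "x \<in> Z" "y \<in> Z" by blast
    moreover from this have "x + y \<in> Z" using assms(1) ideal_in_add by blast
    ultimately show ?thesis by blast
  qed
next
  fix x assume "x \<in> {0} \<union> \<Union>C"
  then show "- x \<in> {0} \<union> \<Union>C" using assms(1) ideal_in_uminus[of UNIV _ x] by auto
next
  fix a x assume "x \<in> {0} \<union> \<Union>C"
  then show "a * x \<in> {0} \<union> \<Union>C" using assms(1) ideal_in_mult[of UNIV _ a x] by auto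
qed simp_all

lemma ideal_in_socle_ideal:
  "X \<in> socle_ideals (UNIV::'a::comm_ring_1 set) \<Longrightarrow> ideal_in UNIV X"
proof (induction rule: socle_ideals.induct)
  case (succ I)
  show ?case by (rule ideal_in_UNIV_soc_succ)
next
  case (lim C)
  show ?case
  proof (rule ideal_in_chain_Union)
    show "\<forall>Z\<in>C. ideal_in UNIV Z" using lim.IH by blast
    show "\<forall>Z1\<in>C. \<forall>Z2\<in>C. Z1 \<subseteq> Z2 \<or> Z2 \<subseteq> Z1"
    proof (intro ballI)
      fix Z1 Z2 assume "Z1 \<in> C" "Z2 \<in> C"
      then show "Z1 \<subseteq> Z2 \<or> Z2 \<subseteq> Z1" using lim.IH socle_ideals_chain[of Z1 UNIV Z2] by blast
    qed
  qed
qed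

section \<open>The socle sequence of a corner ring\<close>

abbreviation corner :: "'a::comm_ring_1 \<Rightarrow> 'a set" where
  "corner e \<equiv> range (\<lambda>x. e * x)"

lemma mem_corner_iff:
  fixes e :: "'a::comm_ring_1"
  assumes "e * e = e"
  shows "x \<in> corner e \<longleftrightarrow> e * x = x"
proof
  assume "x \<in> corner e"
  then obtain y where "x = e * y" by blast
  then show "e * x = x" using assms by (simp add: mult.assoc[symmetric])
qed (metis rangeI)

lemma ideal_in_corner: "ideal_in UNIV (corner (e::'a::comm_ring_1))"
  unfolding ideal_in_def
proof (intro conjI ballI allI)
  show "0 \<in> corner e" by (metis mult_zero_right rangeI)
  fix x assume "x \<in> corner e"
  then obtain u where u: "x = e * u" by blast
  have "- x = e * - u" using u by simp
  then show "- x \<in> corner e" by blast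
  show "x + y \<in> corner e" if "y \<in> corner e" for y
  proof -
    from that obtain v where "y = e * v" by blast
    with u have "x + y = e * (u + v)" by (simp add: distrib_left)
    then show ?thesis by blast
  qed
  show "a * x \<in> corner e" for a
  proof -
    have "a * x = e * (a * u)" using u by (simp add: mult.left_commute)
    then show ?thesis by blast
  qed
qed simp

lemma ideal_in_corner_self: "ideal_in (corner e) (corner (e::'a::comm_ring_1))"
  using ideal_in_corner[of e] unfolding ideal_in_def by auto

lemma ideal_in_UNIV_if_ideal_in_corner:
  fixes e :: "'a::comm_ring_1"
  assumes e: "e * e = e" and J: "ideal_in (corner e) J"
  shows "ideal_in UNIV J"
  unfolding ideal_in_def
proof (intro conjI ballI allI)
  fix x assume x: "x \<in> J"
  show "- x \<in> J" using J x by (rule ideal_in_uminus)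
  show "x + y \<in> J" if "y \<in> J" for y using J x that by (rule ideal_in_add)
  have "e * x = x" using ideal_in_subset[OF J] x mem_corner_iff[OF e] by blast
  then have "a * x = (e * a) * x" for a by (metis mult.assoc mult.commute)
  then show "a * x \<in> J" for a using ideal_in_mult[OF J _ x, of "e * a"] by simp
qed (simp_all add: ideal_in_zero[OF J])

lemma ideal_in_corner_Int:
  "ideal_in UNIV I \<Longrightarrow> ideal_in (corner e) (I \<inter> corner (e::'a::comm_ring_1))"
  using ideal_in_corner[of e] unfolding ideal_in_def by auto

lemma ideal_in_UNIV_vimage_corner:
  fixes e :: "'a::comm_ring_1"
  assumes e: "e * e = e" and S: "ideal_in (corner e) S"
  shows "ideal_in UNIV {y. e * y \<in> S}"
  unfolding ideal_in_def
proof (intro conjI ballI allI)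
  fix x assume x: "x \<in> {y. e * y \<in> S}"
  show "- x \<in> {y. e * y \<in> S}" using ideal_in_uminus[OF S] x by simp
  show "x + y \<in> {y. e * y \<in> S}" if "y \<in> {y. e * y \<in> S}" for y
    using ideal_in_add[OF S] x that by (simp add: distrib_left)
  have "e * (a * x) = (e * a) * (e * x)" for a using e by (metis mult.assoc mult.left_commute)
  then show "a * x \<in> {y. e * y \<in> S}" for a using ideal_in_mult[OF S _, of "e * a"] x by auto
qed (simp_all add: ideal_in_zero[OF S])

lemma ideal_in_sum:
  fixes I J :: "'a::comm_ring_1 set"
  assumes J: "ideal_in UNIV J" and I: "ideal_in UNIV I"
  shows "ideal_in UNIV {j + i |j i. j \<in> J \<and> i \<in> I}"
  unfolding ideal_in_def
proof (intro conjI ballI allI)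
  show "0 \<in> {j + i |j i. j \<in> J \<and> i \<in> I}"
    using ideal_in_zero[OF J] ideal_in_zero[OF I] by force
  fix x assume "x \<in> {j + i |j i. j \<in> J \<and> i \<in> I}"
  then obtain j i where x: "x = j + i" "j \<in> J" "i \<in> I" by blast
  have "- x = - j + - i" using x(1) by simp
  then show "- x \<in> {j + i |j i. j \<in> J \<and> i \<in> I}"
    using ideal_in_uminus[OF J x(2)] ideal_in_uminus[OF I x(3)] by blast
  show "x + y \<in> {j + i |j i. j \<in> J \<and> i \<in> I}" if "y \<in> {j + i |j i. j \<in> J \<and> i \<in> I}" for y
  proof -
    from that obtain j' i' where y: "y = j' + i'" "j' \<in> J" "i' \<in> I" by blast
    have "x + y = (j + j') + (i + i')" using x y by (simp add: algebra_simps)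
    then show ?thesis using ideal_in_add[OF J x(2) y(2)] ideal_in_add[OF I x(3) y(3)] by blast
  qed
  have "a * x = a * j + a * i" for a using x by (simp add: algebra_simps)
  then show "a * x \<in> {j + i |j i. j \<in> J \<and> i \<in> I}" for a
    using ideal_in_mult[OF J _ x(2), of a] ideal_in_mult[OF I _ x(3), of a] by blast
qed simp

text \<open>The ideal J + I meets the corner only in J, since e (j + i) = j + e i with e i \<in> J.\<close>

lemma sum_Int_corner:
  fixes e :: "'a::comm_ring_1"
  assumes e: "e * e = e" and I: "ideal_in UNIV I" and J: "ideal_in UNIV J"
    and "J \<subseteq> corner e" "I \<inter> corner e \<subseteq> J"
  shows "{j + i |j i. j \<in> J \<and> i \<in> I} \<inter> corner e = J"
proof
  show "J \<subseteq> {j + i |j i. j \<in> J \<and> i \<in> I} \<inter> corner e"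
    using assms(4) ideal_in_zero[OF I] by force
  show "{j + i |j i. j \<in> J \<and> i \<in> I} \<inter> corner e \<subseteq> J"
  proof
    fix x assume "x \<in> {j + i |j i. j \<in> J \<and> i \<in> I} \<inter> corner e"
    then obtain j i where x: "x = j + i" "j \<in> J" "i \<in> I" "e * x = x"
      using mem_corner_iff[OF e] by blast
    have "e * j = j" using x(2) assms(4) mem_corner_iff[OF e] by blast
    then have "x = j + e * i" using x(1,4) by (metis distrib_left)
    moreover have "e * i \<in> J" using ideal_in_mult[OF I _ x(3), of e] assms(5) by blast
    ultimately show "x \<in> J" using ideal_in_add[OF J x(2)] by simp
  qed
qed

lemma minimal_over_lift_from_corner:
  fixes e :: "'a::comm_ring_1"
  assumes e: "e * e = e" and I: "ideal_in UNIV I"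
    and J: "minimal_over (corner e) (I \<inter> corner e) J"
  shows "minimal_over UNIV I {j + i |j i. j \<in> J \<and> i \<in> I}"
proof -
  define M where "M = {j + i |j i. j \<in> J \<and> i \<in> I}"
  note JB = minimal_overD(1)[OF J] and IJ = minimal_overD(2)[OF J]
    and J_min = minimal_overD(3)[OF J]
  have JR: "ideal_in UNIV J" using ideal_in_UNIV_if_ideal_in_corner[OF e JB] .
  have J_corner: "J \<subseteq> corner e" using ideal_in_subset[OF JB] .
  have M: "ideal_in UNIV M" unfolding M_def using ideal_in_sum[OF JR I] .
  have M_corner: "M \<inter> corner e = J" unfolding M_def using sum_Int_corner[OF e I JR J_corner] IJ by blast
  have IM: "I \<subseteq> M" unfolding M_def using ideal_in_zero[OF JR] by force
  have "I \<subset> M" using IM IJ J_corner M_corner by blast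
  moreover have "J' = M" if J': "ideal_in UNIV J'" "I \<subset> J'" "J' \<subseteq> M" for J'
  proof -
    obtain x where x: "x \<in> J'" "x \<notin> I" using J' by blast
    then obtain j i where ji: "x = j + i" "j \<in> J" "i \<in> I" using J' unfolding M_def by blast
    have "e * x - x = e * i - i"
      using ji J_corner mem_corner_iff[OF e] by (auto simp: distrib_left)
    then have "e * x - x \<in> I" using ideal_in_diff[OF I ideal_in_mult[OF I _ ji(3)] ji(3)] by simp
    then have "e * x \<notin> I" using x(2) ideal_in_diff[OF I, of "e * x" "e * x - x"] by auto
    moreover have "e * x \<in> J' \<inter> corner e" using ideal_in_mult[OF J'(1) _ x(1)] by blast
    ultimately have "I \<inter> corner e \<subset> J' \<inter> corner e" using J'(2) by blast
    moreover have "J' \<inter> corner e \<subseteq> J" using J'(3) M_corner by blast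
    ultimately have "J' \<inter> corner e = J" using J_min[OF ideal_in_corner_Int[OF J'(1)]] by blast
    then have "M \<subseteq> J'" unfolding M_def using J' ideal_in_add[OF J'(1)] by blast
    with J'(3) show "J' = M" by blast
  qed
  ultimately show ?thesis using M unfolding minimal_over_def M_def by blast
qed

lemma minimal_over_restrict_to_corner:
  fixes e :: "'a::comm_ring_1"
  assumes e: "e * e = e" and I: "ideal_in UNIV I" and J: "minimal_over UNIV I J"
    and ne: "I \<inter> corner e \<noteq> J \<inter> corner e"
  shows "minimal_over (corner e) (I \<inter> corner e) (J \<inter> corner e)"
proof -
  note JR = minimal_overD(1)[OF J] and IJ = minimal_overD(2)[OF J]
    and J_min = minimal_overD(3)[OF J]
  have "J1 = J \<inter> corner e"
    if J1: "ideal_in (corner e) J1" "I \<inter> corner e \<subset> J1" "J1 \<subseteq> J \<inter> corner e" for J1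
  proof -
    define M where "M = {j + i |j i. j \<in> J1 \<and> i \<in> I}"
    have J1R: "ideal_in UNIV J1" using ideal_in_UNIV_if_ideal_in_corner[OF e J1(1)] .
    have J1_corner: "J1 \<subseteq> corner e" using ideal_in_subset[OF J1(1)] .
    have M_corner: "M \<inter> corner e = J1"
      unfolding M_def using sum_Int_corner[OF e I J1R J1_corner] J1(2) by blast
    have "I \<subseteq> M" unfolding M_def using ideal_in_zero[OF J1R] by force
    then have "I \<subset> M" using J1(2) J1_corner M_corner by blast
    moreover have "M \<subseteq> J" unfolding M_def using J1(3) IJ ideal_in_add[OF JR] by blast
    ultimately have "M = J" using J_min[OF ideal_in_sum[OF J1R I, folded M_def]] by blast
    then show ?thesis using M_corner by simp
  qed
  moreover have "I \<inter> corner e \<subset> J \<inter> corner e" using IJ ne by blast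
  ultimately show ?thesis
    unfolding minimal_over_def using ideal_in_corner_Int[OF JR] by blast
qed

lemma soc_succ_corner_subset:
  fixes e :: "'a::comm_ring_1"
  assumes e: "e * e = e" and I: "ideal_in UNIV I"
  shows "soc_succ (corner e) (I \<inter> corner e) \<subseteq> soc_succ UNIV I \<inter> corner e"
proof (rule soc_succ_least)
  show "ideal_in (corner e) (soc_succ UNIV I \<inter> corner e)"
    using ideal_in_corner_Int[OF ideal_in_UNIV_soc_succ] .
  show "I \<inter> corner e \<subseteq> soc_succ UNIV I \<inter> corner e" using subset_soc_succ[of I UNIV] by blast
next
  fix J assume J: "minimal_over (corner e) (I \<inter> corner e) J"
  have "J \<subseteq> {j + i |j i. j \<in> J \<and> i \<in> I}" using ideal_in_zero[OF I] by force
  also have "\<dots> \<subseteq> soc_succ UNIV I"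
    using minimal_over_subset_soc_succ[OF minimal_over_lift_from_corner[OF e I J]] .
  finally have "J \<subseteq> soc_succ UNIV I" .
  moreover have "J \<subseteq> corner e" using ideal_in_subset[OF minimal_overD(1)[OF J]] .
  ultimately show "J \<subseteq> soc_succ UNIV I \<inter> corner e" by blast
qed

lemma soc_succ_subset_vimage_corner:
  fixes e :: "'a::comm_ring_1"
  assumes e: "e * e = e" and I: "ideal_in UNIV I"
  shows "soc_succ UNIV I \<subseteq> {y. e * y \<in> soc_succ (corner e) (I \<inter> corner e)}"
proof -
  define S where "S = soc_succ (corner e) (I \<inter> corner e)"
  have I_S: "I \<inter> corner e \<subseteq> S" unfolding S_def by (rule subset_soc_succ)
  have "soc_succ UNIV I \<subseteq> {y. e * y \<in> S}"
  proof (rule soc_succ_least)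
    show "ideal_in UNIV {y. e * y \<in> S}" unfolding S_def
      using ideal_in_UNIV_vimage_corner[OF e ideal_in_soc_succ[OF ideal_in_corner_self]] by blast
    show "I \<subseteq> {y. e * y \<in> S}"
    proof
      fix i assume "i \<in> I"
      then have "e * i \<in> I \<inter> corner e" using ideal_in_mult[OF I] by blast
      then show "i \<in> {y. e * y \<in> S}" using I_S by blast
    qed
  next
    fix J assume J: "minimal_over UNIV I J"
    have "J \<inter> corner e \<subseteq> S"
    proof (cases "I \<inter> corner e = J \<inter> corner e")
      case True
      then show ?thesis using I_S by blast
    next
      case False
      show ?thesis unfolding S_def
        using minimal_over_subset_soc_succ[OF minimal_over_restrict_to_corner[OF e I J False]] .
    qed
    moreover have "e * y \<in> J \<inter> corner e" if "y \<in> J" for y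
      using ideal_in_mult[OF minimal_overD(1)[OF J], of e y] that by blast
    ultimately show "J \<subseteq> {y. e * y \<in> S}" by blast
  qed
  then show ?thesis unfolding S_def .
qed

lemma soc_succ_Int_corner:
  fixes e :: "'a::comm_ring_1"
  assumes e: "e * e = e" and I: "ideal_in UNIV I"
  shows "soc_succ (corner e) (I \<inter> corner e) = soc_succ UNIV I \<inter> corner e"
proof
  show "soc_succ UNIV I \<inter> corner e \<subseteq> soc_succ (corner e) (I \<inter> corner e)"
  proof
    fix x assume x: "x \<in> soc_succ UNIV I \<inter> corner e"
    then have "e * x \<in> soc_succ (corner e) (I \<inter> corner e)"
      using soc_succ_subset_vimage_corner[OF e I] by blast
    moreover have "e * x = x" using x mem_corner_iff[OF e] by blast
    ultimately show "x \<in> soc_succ (corner e) (I \<inter> corner e)" by simp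
  qed
qed (rule soc_succ_corner_subset[OF e I])

lemma socle_ideal_Int_corner:
  fixes e :: "'a::comm_ring_1"
  assumes e: "e * e = e"
  shows "X \<in> socle_ideals UNIV \<Longrightarrow> X \<inter> corner e \<in> socle_ideals (corner e)"
proof (induction rule: socle_ideals.induct)
  case (succ I)
  then show ?case
    using socle_ideals.succ soc_succ_Int_corner[OF e ideal_in_socle_ideal[OF succ.hyps]] by metis
next
  case (lim C)
  have "({0} \<union> \<Union>C) \<inter> corner e = {0} \<union> \<Union>((\<lambda>Z. Z \<inter> corner e) ` C)"
    by (auto intro: range_eqI[of 0 _ 0])
  then show ?case using socle_ideals.lim[of "(\<lambda>Z. Z \<inter> corner e) ` C"] lim.IH by auto
qed

lemma socle_ideal_of_corner:
  fixes e :: "'a::comm_ring_1"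
  assumes e: "e * e = e"
  shows "Y \<in> socle_ideals (corner e) \<Longrightarrow> \<exists>X\<in>socle_ideals UNIV. Y = X \<inter> corner e"
proof (induction rule: socle_ideals.induct)
  case (succ I)
  then obtain X where X: "X \<in> socle_ideals UNIV" "I = X \<inter> corner e" by blast
  then have "soc_succ (corner e) I = soc_succ UNIV X \<inter> corner e"
    using soc_succ_Int_corner[OF e ideal_in_socle_ideal[OF X(1)]] by simp
  then show ?case using socle_ideals.succ[OF X(1)] by blast
next
  case (lim C)
  define D where "D = {X \<in> socle_ideals UNIV. X \<inter> corner e \<in> C}"
  have "{0} \<union> \<Union>D \<in> socle_ideals UNIV" using socle_ideals.lim[of D] unfolding D_def by blast
  moreover have "{0} \<union> \<Union>C = ({0} \<union> \<Union>D) \<inter> corner e"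
    using lim.IH unfolding D_def by (auto intro: range_eqI[of 0 _ 0])
  ultimately show ?case by blast
qed

lemma socle_ideals_corner:
  fixes e :: "'a::comm_ring_1"
  assumes "e * e = e"
  shows "socle_ideals (corner e) = (\<lambda>X. X \<inter> corner e) ` socle_ideals UNIV"
proof (intro equalityI subsetI)
  fix Y assume "Y \<in> socle_ideals (corner e)"
  with socle_ideal_of_corner[OF assms] show "Y \<in> (\<lambda>X. X \<inter> corner e) ` socle_ideals UNIV"
    by blast
next
  fix Y assume "Y \<in> (\<lambda>X. X \<inter> corner e) ` socle_ideals UNIV"
  with socle_ideal_Int_corner[OF assms] show "Y \<in> socle_ideals (corner e)" by blast
qed

lemma socle_ideal_Int_corner_stable:
  fixes e :: "'a::comm_ring_1"
  assumes e: "e * e = e" and J: "J \<in> socle_ideals UNIV"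
    and eq: "J \<inter> corner e = soc_succ UNIV J \<inter> corner e"
    and Y: "Y \<in> socle_ideals UNIV" "J \<subseteq> Y"
  shows "Y \<inter> corner e = J \<inter> corner e"
proof -
  have "J \<subseteq> Y \<longrightarrow> Y \<inter> corner e = J \<inter> corner e" using Y(1)
  proof (induction Y rule: socle_ideals.induct)
    case (succ Z)
    show ?case
    proof
      assume JZ: "J \<subseteq> soc_succ UNIV Z"
      from socle_ideal_below_or_above_succ[OF succ.hyps J]
      show "soc_succ UNIV Z \<inter> corner e = J \<inter> corner e"
      proof
        assume "J \<subseteq> Z"
        then have "Z \<inter> corner e = J \<inter> corner e" using succ.IH by blast
        then have "soc_succ UNIV Z \<inter> corner e = soc_succ UNIV J \<inter> corner e"
          using soc_succ_Int_corner[OF e ideal_in_socle_ideal[OF succ.hyps]]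
            soc_succ_Int_corner[OF e ideal_in_socle_ideal[OF J]] by simp
        then show ?thesis using eq by simp
      next
        assume "soc_succ UNIV Z \<subseteq> J"
        with JZ show ?thesis by simp
      qed
    qed
  next
    case (lim C)
    have "Z \<inter> corner e \<subseteq> J \<inter> corner e" if Z: "Z \<in> C" for Z
    proof -
      from Z lim.IH have "Z \<in> socle_ideals UNIV" "J \<subseteq> Z \<longrightarrow> Z \<inter> corner e = J \<inter> corner e"
        by blast+
      with socle_ideals_chain[OF J] show ?thesis by blast
    qed
    then have "({0} \<union> \<Union>C) \<inter> corner e \<subseteq> J \<inter> corner e"
      using zero_in_socle_ideal[OF J] by blast
    then show ?case by blast
  qed
  with Y(2) show ?thesis by blast
qed

lemma socle_layer_Int_corner_nontrivial:
  fixes e :: "'a::comm_ring_1"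
  assumes e: "e * e = e" and U: "UNIV \<in> socle_ideals (UNIV :: 'a set)"
    and J: "J \<in> socle_ideals UNIV" "e \<notin> J"
  shows "J \<inter> corner e \<noteq> soc_succ UNIV J \<inter> corner e"
proof
  assume "J \<inter> corner e = soc_succ UNIV J \<inter> corner e"
  from socle_ideal_Int_corner_stable[OF e J(1) this U subset_UNIV] have "corner e \<subseteq> J" by blast
  moreover have "e \<in> corner e" using rangeI[of "\<lambda>x. e * x" e] e by simp
  ultimately show False using J(2) by blast
qed

lemma socle_ideal_Int_corner_subset_iff:
  fixes e :: "'a::comm_ring_1"
  assumes e: "e * e = e" and U: "UNIV \<in> socle_ideals (UNIV :: 'a set)"
    and avoid: "\<And>J. J \<in> socle_ideals UNIV \<Longrightarrow> J \<noteq> UNIV \<Longrightarrow> e \<notin> J"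
    and I: "I \<in> socle_ideals UNIV" and J: "J \<in> socle_ideals UNIV"
  shows "I \<inter> corner e \<subseteq> J \<inter> corner e \<longleftrightarrow> I \<subseteq> J"
proof
  assume sub: "I \<inter> corner e \<subseteq> J \<inter> corner e"
  show "I \<subseteq> J"
  proof (rule ccontr)
    assume "\<not> I \<subseteq> J"
    with socle_ideal_below_or_above_succ[OF J I] have "soc_succ UNIV J \<subseteq> I" "J \<noteq> UNIV" by auto
    then have "J \<inter> corner e = soc_succ UNIV J \<inter> corner e"
      using sub subset_soc_succ[of J UNIV] by blast
    with socle_layer_Int_corner_nontrivial[OF e U J avoid[OF J \<open>J \<noteq> UNIV\<close>]] show False ..
  qed
qed blast

lemma same_loewy_length_corner:
  fixes e :: "'a::comm_ring_1"
  assumes e: "e * e = e" and U: "UNIV \<in> socle_ideals (UNIV :: 'a set)"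
    and avoid: "\<And>J. J \<in> socle_ideals UNIV \<Longrightarrow> J \<noteq> UNIV \<Longrightarrow> e \<notin> J"
  shows "same_loewy_length UNIV (corner e)"
  unfolding same_loewy_length_def
proof (intro exI conjI)
  note subset_iff = socle_ideal_Int_corner_subset_iff[OF e U avoid]
  have inj: "inj_on (\<lambda>X. X \<inter> corner e) (socle_ideals UNIV)"
    by (rule inj_onI) (use subset_iff in blast)
  show "bij_betw (\<lambda>X. X \<inter> corner e) (socle_ideals UNIV) (socle_ideals (corner e))"
    unfolding bij_betw_def socle_ideals_corner[OF e] using inj by blast
  show "\<forall>I\<in>socle_ideals UNIV. \<forall>J\<in>socle_ideals UNIV. I \<subseteq> J \<longleftrightarrow> I \<inter> corner e \<subseteq> J \<inter> corner e"
    using subset_iff by blast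
qed

section \<open>Layers of a corner ring\<close>

lemma fin_fun_subset_if_closed:
  fixes V :: "('b \<Rightarrow> 'k::field) set"
  assumes zero: "(\<lambda>i. 0) \<in> V" and add: "\<And>f h. f \<in> V \<Longrightarrow> h \<in> V \<Longrightarrow> (\<lambda>i. f i + h i) \<in> V"
    and delta: "\<And>\<mu> c. \<mu> \<in> S \<Longrightarrow> (\<lambda>i. if i = \<mu> then c else 0) \<in> V"
  shows "fin_fun S \<subseteq> V"
proof
  have "f \<in> V" if "finite F" "{i. f i \<noteq> 0} \<subseteq> F" "F \<subseteq> S" for F f
    using that
  proof (induction F arbitrary: f rule: finite_induct)
    case empty
    then have "f = (\<lambda>i. 0)" by auto
    with zero show ?case by simp
  next
    case (insert \<mu> F)
    have "f(\<mu> := 0) \<in> V" by (rule insert.IH) (use insert.prems in auto)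
    moreover have "(\<lambda>i. if i = \<mu> then f \<mu> else 0) \<in> V" using delta insert.prems by simp
    moreover have "f = (\<lambda>i. (f(\<mu> := 0)) i + (if i = \<mu> then f \<mu> else 0))" by auto
    ultimately show ?case using add by metis
  qed
  then show "f \<in> V" if "f \<in> fin_fun S" for f
    using that unfolding fin_fun_def by blast
qed

lemma image_eq_fin_fun_support:
  fixes g :: "'a::comm_ring_1 \<Rightarrow> 'b \<Rightarrow> 'k::field"
  assumes gX: "g ` X = fin_fun Lam"
    and hom: "\<forall>x\<in>X. \<forall>y\<in>X. g (x + y) = (\<lambda>i. g x i + g y i) \<and> g (x * y) = (\<lambda>i. g x i * g y i)"
    and Y: "Y \<subseteq> X" "0 \<in> Y" "\<And>x y. x \<in> Y \<Longrightarrow> y \<in> Y \<Longrightarrow> x + y \<in> Y"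
      "\<And>x y. x \<in> X \<Longrightarrow> y \<in> Y \<Longrightarrow> x * y \<in> Y"
  shows "g ` Y = fin_fun {\<mu>. \<exists>y\<in>Y. g y \<mu> \<noteq> 0}"
proof
  show "g ` Y \<subseteq> fin_fun {\<mu>. \<exists>y\<in>Y. g y \<mu> \<noteq> 0}"
    using gX Y(1) unfolding fin_fun_def by blast
  show "fin_fun {\<mu>. \<exists>y\<in>Y. g y \<mu> \<noteq> 0} \<subseteq> g ` Y"
  proof (rule fin_fun_subset_if_closed)
    have "g 0 = (\<lambda>i. g 0 i + g 0 i)" using hom Y(1,2) by (metis add_0 subsetD)
    then have "g 0 = (\<lambda>i. 0)" by (metis add_cancel_right_right)
    then show "(\<lambda>i. 0) \<in> g ` Y" using Y(2) by (metis image_eqI)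
  next
    fix f h assume "f \<in> g ` Y" "h \<in> g ` Y"
    then obtain y1 y2 where "y1 \<in> Y" "y2 \<in> Y" "f = g y1" "h = g y2" by blast
    moreover from this have "g (y1 + y2) = (\<lambda>i. f i + h i)" using hom Y(1) by blast
    ultimately show "(\<lambda>i. f i + h i) \<in> g ` Y" using Y(3) by (metis image_eqI)
  next
    fix \<mu> c assume "\<mu> \<in> {\<mu>. \<exists>y\<in>Y. g y \<mu> \<noteq> 0}"
    then obtain y where y: "y \<in> Y" "g y \<mu> \<noteq> 0" by blast
    have "g y \<in> fin_fun Lam" using gX y(1) Y(1) by blast
    then have "\<mu> \<in> Lam" using y(2) unfolding fin_fun_def by blast
    then have "(\<lambda>i. if i = \<mu> then c / g y \<mu> else 0) \<in> fin_fun Lam"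
      unfolding fin_fun_def by (auto intro: finite_subset[of _ "{\<mu>}"])
    then obtain x where x: "x \<in> X" "g x = (\<lambda>i. if i = \<mu> then c / g y \<mu> else 0)"
      using gX by (metis imageE)
    have "g (x * y) = (\<lambda>i. g x i * g y i)" using hom x(1) y(1) Y(1) by blast
    also have "\<dots> = (\<lambda>i. if i = \<mu> then c else 0)" using x(2) y(2) by auto
    finally show "(\<lambda>i. if i = \<mu> then c else 0) \<in> g ` Y"
      using Y(4)[OF x(1) y(1)] by (metis image_eqI)
  qed
qed

lemma layer_iso_Int_ideal_support:
  fixes g :: "'a::comm_ring_1 \<Rightarrow> 'a \<Rightarrow> 'k::field" and phi :: "'k \<Rightarrow> 'a"
  assumes gZ: "g ` Z = fin_fun Lam"
    and hom: "\<forall>x\<in>Z. \<forall>y\<in>Z. g (x + y) = (\<lambda>i. g x i + g y i) \<and> g (x * y) = (\<lambda>i. g x i * g y i)"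
    and scal: "\<forall>k. \<forall>x\<in>Z. g (phi k * x) = (\<lambda>i. k * g x i)"
    and ker: "{x\<in>Z. g x = (\<lambda>i. 0)} = X"
    and Z: "ideal_in UNIV Z" and B: "ideal_in UNIV B"
  shows "layer_iso phi (X \<inter> B) (Z \<inter> B) {\<mu>. \<exists>y\<in>Z \<inter> B. g y \<mu> \<noteq> 0}"
  unfolding layer_iso_def
proof (intro exI conjI)
  show "g ` (Z \<inter> B) = fin_fun {\<mu>. \<exists>y\<in>Z \<inter> B. g y \<mu> \<noteq> 0}"
  proof (rule image_eq_fin_fun_support[OF gZ hom])
    show "0 \<in> Z \<inter> B" using ideal_in_zero[OF Z] ideal_in_zero[OF B] by blast
    show "x + y \<in> Z \<inter> B" if "x \<in> Z \<inter> B" "y \<in> Z \<inter> B" for x y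
      using that ideal_in_add[OF Z] ideal_in_add[OF B] by blast
    show "x * y \<in> Z \<inter> B" if "x \<in> Z" "y \<in> Z \<inter> B" for x y
      using that ideal_in_mult[OF Z] ideal_in_mult[OF B] by blast
  qed blast
qed (use hom scal ker in blast)+

lemma layer_iso_Int_ideal:
  assumes "layer_iso phi X Z Lam" "ideal_in UNIV Z" "ideal_in UNIV B"
  shows "\<exists>Lam'. layer_iso phi (X \<inter> B) (Z \<inter> B) Lam'"
  using assms layer_iso_Int_ideal_support[of _ Z Lam phi X B] unfolding layer_iso_def[of phi X Z Lam]
  by blast

lemma layer_iso_empty: "layer_iso phi I J {} \<Longrightarrow> J = I"
  unfolding layer_iso_def fin_fun_def by auto

lemma unital_K_subalgebra_corner:
  fixes e :: "'a::comm_ring_1"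
  assumes e: "e * e = e"
  shows "unital_K_subalgebra phi (corner e) e"
  unfolding unital_K_subalgebra_def
proof (intro conjI ballI allI)
  note B = ideal_in_corner[of e]
  show "0 \<in> corner e" using ideal_in_zero[OF B] .
  show "e \<in> corner e" using rangeI[of "\<lambda>x. e * x" e] e by simp
  fix x assume x: "x \<in> corner e"
  show "- x \<in> corner e" using ideal_in_uminus[OF B x] .
  show "e * x = x" using x mem_corner_iff[OF e] by blast
  show "phi k * x \<in> corner e" for k using ideal_in_mult[OF B _ x] by simp
  show "x + y \<in> corner e" "x * y \<in> corner e" if "y \<in> corner e" for y
    using ideal_in_add[OF B x that] ideal_in_mult[OF B _ that, of x] by auto
qed

lemma regular_corner:
  fixes e :: "'a::comm_ring_1"
  assumes regular: "\<And>a::'a. \<exists>x. a * x * a = a" and e: "e * e = e" and a: "a \<in> corner e"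
  shows "\<exists>x\<in>corner e. a * x * a = a"
proof -
  obtain x where "a * x * a = a" using regular by blast
  moreover have "a * e = a" using a mem_corner_iff[OF e] by (simp add: mult.commute)
  ultimately have "a * (e * x) * a = a" by (metis mult.assoc)
  then show ?thesis by blast
qed

lemma layer_iso_corner:
  fixes phi :: "'k::field \<Rightarrow> 'a::comm_ring_1"
  assumes U: "UNIV \<in> socle_ideals (UNIV :: 'a set)"
    and layers: "\<And>X. X \<in> socle_ideals UNIV \<Longrightarrow> X \<noteq> UNIV \<Longrightarrow>
                   \<exists>Lam. layer_iso phi X (soc_succ UNIV X) Lam"
    and e: "e * e = e" and avoid: "\<And>J. J \<in> socle_ideals UNIV \<Longrightarrow> J \<noteq> UNIV \<Longrightarrow> e \<notin> J"
    and I: "I \<in> socle_ideals (corner e)" "I \<noteq> corner e"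
  shows "\<exists>Lam. Lam \<noteq> {} \<and> layer_iso phi I (soc_succ (corner e) I) Lam"
proof -
  obtain X where X: "X \<in> socle_ideals UNIV" "I = X \<inter> corner e"
    using I(1) socle_ideals_corner[OF e] by blast
  have "X \<noteq> UNIV" using X I(2) by blast
  with X(1) layers obtain L where "layer_iso phi X (soc_succ UNIV X) L" by blast
  from layer_iso_Int_ideal[OF this ideal_in_UNIV_soc_succ ideal_in_corner]
  obtain L' where L': "layer_iso phi (X \<inter> corner e) (soc_succ UNIV X \<inter> corner e) L'" by blast
  have "L' \<noteq> {}"
  proof
    assume "L' = {}"
    with L' have "soc_succ UNIV X \<inter> corner e = X \<inter> corner e" using layer_iso_empty by blast
    with socle_layer_Int_corner_nontrivial[OF e U X(1) avoid[OF X(1) \<open>X \<noteq> UNIV\<close>]]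
    show False by simp
  qed
  moreover have "soc_succ (corner e) I = soc_succ UNIV X \<inter> corner e"
    using soc_succ_Int_corner[OF e ideal_in_socle_ideal[OF X(1)]] X(2) by simp
  ultimately show ?thesis using L' X(2) by auto
qed

lemma in_RK_corner:
  fixes phi :: "'k::field \<Rightarrow> 'a::comm_ring_1"
  assumes RK: "in_RK phi UNIV 1" and e: "e * e = e"
    and avoid: "\<And>J. J \<in> socle_ideals UNIV \<Longrightarrow> J \<noteq> UNIV \<Longrightarrow> e \<notin> J"
  shows "in_RK phi (corner e) e"
proof -
  from RK have regular: "\<forall>a::'a. \<exists>x. a * x * a = a"
    and U: "UNIV \<in> socle_ideals (UNIV :: 'a set)"
    and top: "\<exists>I\<in>socle_ideals (UNIV :: 'a set). I \<noteq> UNIV \<and> soc_succ UNIV I = UNIV"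
    and layers: "\<forall>I\<in>socle_ideals (UNIV :: 'a set). I \<noteq> UNIV \<longrightarrow>
                   (\<exists>Lam. Lam \<noteq> {} \<and> layer_iso phi I (soc_succ UNIV I) Lam)"
    unfolding in_RK_def by blast+
  have socle_top: "corner e \<in> socle_ideals (corner e)" using socle_ideal_Int_corner[OF e U] by simp
  have top_layer: "\<exists>I\<in>socle_ideals (corner e). I \<noteq> corner e \<and> soc_succ (corner e) I = corner e"
  proof -
    from top obtain I0 :: "'a set" where I0: "I0 \<in> socle_ideals UNIV" "I0 \<noteq> UNIV" "soc_succ UNIV I0 = UNIV"
      by blast
    have "I0 \<inter> corner e \<noteq> corner e"
      using avoid[OF I0(1,2)] rangeI[of "\<lambda>x. e * x" e] e by auto
    moreover have "soc_succ (corner e) (I0 \<inter> corner e) = corner e"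
      using soc_succ_Int_corner[OF e ideal_in_socle_ideal[OF I0(1)]] I0(3) by simp
    ultimately show ?thesis
      using socle_ideal_Int_corner[OF e I0(1)] by (intro bexI[of _ "I0 \<inter> corner e"] conjI)
  qed
  have layers': "\<exists>Lam. layer_iso phi X (soc_succ UNIV X) Lam"
    if "X \<in> socle_ideals UNIV" "X \<noteq> UNIV" for X
    using layers that by blast
  show ?thesis
    unfolding in_RK_def
  proof (intro conjI ballI impI)
    show "unital_K_subalgebra phi (corner e) e" using unital_K_subalgebra_corner[OF e] .
    show "\<exists>x\<in>corner e. a * x * a = a" if "a \<in> corner e" for a
      using regular_corner[OF _ e that] regular by blast
  qed (use socle_top top_layer layer_iso_corner[OF U layers' e avoid] in blast)+
qed

section \<open>Lifting the top layer\<close>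

lemma idempotent_prod:
  fixes x :: "'i \<Rightarrow> 'a::comm_monoid_mult"
  assumes "\<And>j. j \<in> A \<Longrightarrow> x j * x j = x j"
  shows "prod x A * prod x A = prod x A"
proof -
  have "prod x A * prod x A = (\<Prod>j\<in>A. x j * x j)" by (simp add: prod.distrib)
  also have "\<dots> = prod x A" using assms by (intro prod.cong) simp_all
  finally show ?thesis .
qed

lemma sum_prod_one_minus_telescope:
  fixes E :: "nat \<Rightarrow> 'a::comm_ring_1"
  shows "(\<Sum>i<k. E i * (\<Prod>j<i. 1 - E j)) + (\<Prod>j<k. 1 - E j) = 1"
proof (induction k)
  case (Suc k)
  have "(\<Sum>i<Suc k. E i * (\<Prod>j<i. 1 - E j)) + (\<Prod>j<Suc k. 1 - E j)
      = (\<Sum>i<k. E i * (\<Prod>j<i. 1 - E j)) + (\<Prod>j<k. 1 - E j) * (E k + (1 - E k))"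
    by (simp add: algebra_simps)
  then show ?case using Suc.IH by simp
qed simp

lemma prod_one_minus_factor:
  fixes E :: "nat \<Rightarrow> 'a::comm_ring_1"
  assumes "i < k"
  shows "\<exists>q. (\<Prod>j<k. 1 - E j) = (1 - E i) * q"
  using prod.remove[of "{..<k}" i "\<lambda>j. 1 - E j"] assms by auto

lemma orthogonalised_mult_eq_0:
  fixes E f :: "nat \<Rightarrow> 'a::comm_ring_1"
  assumes E: "\<And>j. j < m \<Longrightarrow> E j * E j = E j"
    and f_def: "f = (\<lambda>i. if i < m then E i * (\<Prod>j<i. 1 - E j) else (\<Prod>j<m. 1 - E j))"
    and "i < j" "j \<le> m"
  shows "f i * f j = 0"
proof -
  have "i < m" using assms(3,4) by simp
  have "\<exists>q. f j = (1 - E i) * q"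
  proof (cases "j < m")
    case True
    then obtain q where "(\<Prod>k<j. 1 - E k) = (1 - E i) * q"
      using prod_one_minus_factor[OF \<open>i < j\<close>] by blast
    then have "f j = (1 - E i) * (E j * q)" using True unfolding f_def by (simp add: ac_simps)
    then show ?thesis by blast
  next
    case False
    then show ?thesis using prod_one_minus_factor[OF \<open>i < m\<close>] unfolding f_def by simp
  qed
  then obtain q where q: "f j = (1 - E i) * q" by blast
  have "f i * f j = (E i - E i * E i) * ((\<Prod>k<i. 1 - E k) * q)"
    using \<open>i < m\<close> unfolding q unfolding f_def by (simp add: algebra_simps)
  then show ?thesis using E[OF \<open>i < m\<close>] by simp
qed

lemma complete_orthogonal_idempotents:
  fixes E f :: "nat \<Rightarrow> 'a::comm_ring_1"
  assumes E: "\<And>j. j < m \<Longrightarrow> E j * E j = E j"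
    and f_def: "f = (\<lambda>i. if i < m then E i * (\<Prod>j<i. 1 - E j) else (\<Prod>j<m. 1 - E j))"
  shows "\<And>i. i \<le> m \<Longrightarrow> f i * f i = f i"
    and "\<And>i j. i \<le> m \<Longrightarrow> j \<le> m \<Longrightarrow> i \<noteq> j \<Longrightarrow> f i * f j = 0"
    and "(\<Sum>i\<le>m. f i) = 1"
proof -
  have one_minus: "(1 - E j) * (1 - E j) = 1 - E j" if "j < m" for j
    using E[OF that] by (simp add: algebra_simps)
  have P: "(\<Prod>j<k. 1 - E j) * (\<Prod>j<k. 1 - E j) = (\<Prod>j<k. 1 - E j)" if "k \<le> m" for k
    using that by (intro idempotent_prod one_minus) simp
  show "f i * f i = f i" if "i \<le> m" for i
  proof (cases "i < m")
    case True
    have "f i * f i = (E i * E i) * ((\<Prod>j<i. 1 - E j) * (\<Prod>j<i. 1 - E j))"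
      using True unfolding f_def by (simp add: algebra_simps)
    then show ?thesis using True E P[of i] unfolding f_def by simp
  next
    case False
    then show ?thesis using P[of m] unfolding f_def by simp
  qed
  show "f i * f j = 0" if "i \<le> m" "j \<le> m" "i \<noteq> j" for i j
    using that orthogonalised_mult_eq_0[OF E f_def, of i j] orthogonalised_mult_eq_0[OF E f_def, of j i]
    by (cases "i < j") (simp_all add: mult.commute)
  have "(\<Sum>i\<le>m. f i) = (\<Sum>i<m. E i * (\<Prod>j<i. 1 - E j)) + (\<Prod>j<m. 1 - E j)"
    unfolding f_def lessThan_Suc_atMost[symmetric] by simp
  then show "(\<Sum>i\<le>m. f i) = 1" using sum_prod_one_minus_telescope by simp
qed

locale top_layer_coordinates =
  fixes phi :: "'k::field \<Rightarrow> 'a::comm_ring_1" and I0 :: "'a set"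
    and g :: "'a \<Rightarrow> 'a \<Rightarrow> 'k" and Lam :: "'a set"
  assumes RK: "in_RK phi UNIV 1"
    and I0: "I0 \<in> socle_ideals UNIV" "I0 \<noteq> UNIV" "soc_succ UNIV I0 = UNIV"
    and Lam_finite: "finite Lam"
    and g_image: "g ` UNIV = fin_fun Lam"
    and g_hom: "\<forall>x\<in>UNIV. \<forall>y\<in>UNIV. g (x + y) = (\<lambda>i. g x i + g y i) \<and> g (x * y) = (\<lambda>i. g x i * g y i)"
    and g_scale: "\<forall>k. \<forall>x\<in>UNIV. g (phi k * x) = (\<lambda>i. k * g x i)"
    and g_kernel: "{x\<in>UNIV. g x = (\<lambda>i. 0)} = I0"
begin

lemma g_add: "g (x + y) = (\<lambda>i. g x i + g y i)"
  using g_hom by blast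

lemma g_mult: "g (x * y) = (\<lambda>i. g x i * g y i)"
  using g_hom by blast

lemma g_diff: "g (x - y) = (\<lambda>i. g x i - g y i)"
  using g_add[of "x - y" y] by (simp add: fun_eq_iff algebra_simps)

lemma g_in_fin_fun: "g x \<in> fin_fun Lam"
  using g_image by blast

lemma g_eq_0_outside: "i \<notin> Lam \<Longrightarrow> g x i = 0"
  using g_in_fin_fun unfolding fin_fun_def by blast

lemma indicator_singleton_in_range:
  assumes "\<mu> \<in> Lam"
  obtains a where "g a = indicator {\<mu>}"
proof -
  have "indicator {\<mu>} \<in> fin_fun Lam"
    using assms unfolding fin_fun_def by (auto simp: indicator_def)
  with g_image that show thesis by (metis imageE)
qed

lemma g_one: "g 1 = indicator Lam"
proof
  fix i
  show "g 1 i = indicator Lam i"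
  proof (cases "i \<in> Lam")
    case True
    obtain a where a: "g a = indicator {i}" using indicator_singleton_in_range[OF True] .
    have "g a i = g 1 i * g a i" using g_mult[of 1 a] by (metis mult_1)
    then show ?thesis using a True by simp
  qed (simp add: g_eq_0_outside)
qed

text \<open>Von Neumann regularity lifts the idempotents of the top layer: if a x a = a then
  a x is idempotent, and g x is 1 wherever g a is nonzero.\<close>

lemma lift_idempotent:
  assumes "\<mu> \<in> Lam"
  obtains \<epsilon> where "\<epsilon> * \<epsilon> = \<epsilon>" "g \<epsilon> = indicator {\<mu>}"
proof -
  obtain a where a: "g a = indicator {\<mu>}" using indicator_singleton_in_range[OF assms] .
  obtain x where x: "a * x * a = a" using RK unfolding in_RK_def by blast
  have "g a \<mu> * g x \<mu> * g a \<mu> = g a \<mu>" using arg_cong[OF x, of "\<lambda>y. g y \<mu>"] by (simp add: g_mult)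
  then have "g x \<mu> = 1" using a by simp
  then have "g (a * x) = indicator {\<mu>}" using a by (auto simp: g_mult indicator_def)
  moreover have "(a * x) * (a * x) = a * x" using x by (metis mult.assoc)
  ultimately show thesis using that by blast
qed

lemma not_in_proper_socle_ideal:
  assumes "g e \<noteq> (\<lambda>i. 0)" "J \<in> socle_ideals UNIV" "J \<noteq> UNIV"
  shows "e \<notin> J"
  using socle_ideal_subset_top[OF I0(1,3) assms(2,3)] g_kernel assms(1) by blast

lemma top_dim_corner:
  assumes e: "e * e = e" and ge: "g e = indicator {\<mu>}"
  shows "top_dim phi (corner e) 1"
proof -
  have "e \<notin> I0" using not_in_proper_socle_ideal[OF _ I0(1,2)] ge
    by (metis indicator_simps(1) insertI1 zero_neq_one)
  have support: "{\<nu>. \<exists>y\<in>corner e. g y \<nu> \<noteq> 0} = {\<mu>}"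
  proof
    have "e \<in> corner e" "g e \<mu> \<noteq> 0"
      using ge rangeI[of "\<lambda>x. e * x" e] e by simp_all
    then show "{\<mu>} \<subseteq> {\<nu>. \<exists>y\<in>corner e. g y \<nu> \<noteq> 0}" by blast
    show "{\<nu>. \<exists>y\<in>corner e. g y \<nu> \<noteq> 0} \<subseteq> {\<mu>}"
    proof
      fix \<nu> assume "\<nu> \<in> {\<nu>. \<exists>y\<in>corner e. g y \<nu> \<noteq> 0}"
      then obtain y where y: "e * y = y" "g y \<nu> \<noteq> 0" using mem_corner_iff[OF e] by blast
      have "g y \<nu> = g e \<nu> * g y \<nu>" using g_mult[of e y] y(1) by metis
      then show "\<nu> \<in> {\<mu>}" using y(2) ge by (cases "\<nu> = \<mu>") auto
    qed
  qed
  have "layer_iso phi (I0 \<inter> corner e) (UNIV \<inter> corner e)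
          {\<nu>. \<exists>y\<in>UNIV \<inter> corner e. g y \<nu> \<noteq> 0}"
    by (rule layer_iso_Int_ideal_support[OF g_image g_hom g_scale g_kernel _ ideal_in_corner])
      (simp add: ideal_in_def)
  then have "layer_iso phi (I0 \<inter> corner e) (corner e) {\<mu>}" by (simp only: Int_UNIV_left support)
  moreover have "I0 \<inter> corner e \<noteq> corner e" using \<open>e \<notin> I0\<close> rangeI[of "\<lambda>x. e * x" e] e by auto
  moreover have "soc_succ (corner e) (I0 \<inter> corner e) = corner e"
    using soc_succ_Int_corner[OF e ideal_in_socle_ideal[OF I0(1)]] I0(3) by simp
  ultimately show ?thesis
    unfolding top_dim_def using socle_ideal_Int_corner[OF e I0(1)]
    by (intro bexI[of _ "I0 \<inter> corner e"] conjI exI[of _ "{\<mu>}"]) simp_all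
qed

lemma corner_block:
  assumes e: "e * e = e" and ge: "g e = indicator {\<mu>}"
  shows "in_RK phi (corner e) e \<and> top_dim phi (corner e) 1 \<and> same_loewy_length UNIV (corner e)"
proof -
  have avoid: "e \<notin> J" if "J \<in> socle_ideals UNIV" "J \<noteq> UNIV" for J
    using not_in_proper_socle_ideal[OF _ that] ge by (metis indicator_simps(1) insertI1 zero_neq_one)
  have "UNIV \<in> socle_ideals (UNIV :: 'a set)" using RK unfolding in_RK_def by blast
  then show ?thesis
    using in_RK_corner[OF RK e avoid] top_dim_corner[OF e ge] same_loewy_length_corner[OF e _ avoid]
    by blast
qed

lemma g_prod_one_minus:
  fixes k :: nat
  assumes "\<And>j. j < k \<Longrightarrow> g (E j) = indicator {l j}"
  shows "g (\<Prod>j<k. 1 - E j) = indicator (Lam - l ` {..<k})"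
  using assms
proof (induction k)
  case 0
  show ?case using g_one by simp
next
  case (Suc k)
  have "l k \<in> Lam" using Suc.prems[of k] g_eq_0_outside[of "l k" "E k"] by force
  then have "g (1 - E k) = indicator (Lam - {l k})"
    using Suc.prems[of k] by (auto simp: g_diff g_one indicator_def fun_eq_iff)
  moreover have "Lam - l ` {..<Suc k} = (Lam - l ` {..<k}) \<inter> (Lam - {l k})"
    by (auto simp: lessThan_Suc)
  ultimately show ?case
    using Suc by (auto simp: g_mult indicator_inter_arith fun_eq_iff)
qed

lemma Lam_nonempty: "Lam \<noteq> {}"
proof
  assume "Lam = {}"
  then have "g x = (\<lambda>i. 0)" for x using g_eq_0_outside by blast
  then have "I0 = UNIV" using g_kernel by simp
  with I0(2) show False ..
qed

lemma lift_coordinate_idempotents: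
  assumes l: "bij_betw l {..<Suc m} Lam"
  obtains E where "\<And>j. j < Suc m \<Longrightarrow> E j * E j = E j \<and> g (E j) = indicator {l j}"
proof -
  have "\<forall>j. \<exists>\<epsilon>. j < Suc m \<longrightarrow> \<epsilon> * \<epsilon> = \<epsilon> \<and> g \<epsilon> = indicator {l j}"
  proof
    fix j
    show "\<exists>\<epsilon>. j < Suc m \<longrightarrow> \<epsilon> * \<epsilon> = \<epsilon> \<and> g \<epsilon> = indicator {l j}"
    proof (cases "j < Suc m")
      case True
      then have "l j \<in> Lam" using l by (auto simp: bij_betw_def)
      then obtain \<epsilon> where "\<epsilon> * \<epsilon> = \<epsilon>" "g \<epsilon> = indicator {l j}"
        using lift_idempotent by blast
      then show ?thesis by blast
    qed simp
  qed
  then show thesis using that by (metis (full_types))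
qed

lemma g_orthogonalised:
  assumes l: "bij_betw l {..<Suc m} Lam"
    and E: "\<And>j. j < Suc m \<Longrightarrow> g (E j) = indicator {l j}"
    and f_def: "f = (\<lambda>i. if i < m then E i * (\<Prod>j<i. 1 - E j) else (\<Prod>j<m. 1 - E j))"
    and "i \<le> m"
  shows "g (f i) = indicator {l i}"
proof -
  have l_inj: "l i \<notin> l ` {..<i}" if "i \<le> m" for i
  proof
    assume "l i \<in> l ` {..<i}"
    then obtain k where "k < i" "l k = l i" by auto
    with that inj_onD[OF bij_betw_imp_inj_on[OF l], of k i] show False by simp
  qed
  show ?thesis
  proof (cases "i < m")
    case True
    have "l i \<in> Lam" using l True by (auto simp: bij_betw_def)
    then show ?thesis using True E l_inj[OF \<open>i \<le> m\<close>] g_prod_one_minus[of i E l]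
      unfolding f_def by (auto simp: g_mult indicator_def fun_eq_iff)
  next
    case False
    then have "i = m" using \<open>i \<le> m\<close> by simp
    have "Lam - l ` {..<m} = {l m}"
      using l l_inj[of m] by (auto simp: bij_betw_def lessThan_Suc)
    then show ?thesis using False \<open>i = m\<close> g_prod_one_minus[of m E l] E unfolding f_def by simp
  qed
qed

lemma block_decomposition:
  obtains e :: "nat \<Rightarrow> 'a" where
    "\<And>i. i < card Lam \<Longrightarrow> e i * e i = e i"
    "\<And>i j. i < card Lam \<Longrightarrow> j < card Lam \<Longrightarrow> i \<noteq> j \<Longrightarrow> e i * e j = 0"
    "(\<Sum>i<card Lam. e i) = 1"
    "\<And>i. i < card Lam \<Longrightarrow> \<exists>\<mu>. g (e i) = indicator {\<mu>}"
proof -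
  from Lam_finite Lam_nonempty have "card Lam > 0" by (simp add: card_gt_0_iff)
  then obtain m where m: "card Lam = Suc m" using gr0_implies_Suc by blast
  obtain l where l: "bij_betw l {..<Suc m} Lam"
    using ex_bij_betw_nat_finite[OF Lam_finite] m by (auto simp: atLeast0LessThan)
  obtain E where E: "\<And>j. j < Suc m \<Longrightarrow> E j * E j = E j \<and> g (E j) = indicator {l j}"
    using lift_coordinate_idempotents[OF l] by blast
  define f where "f = (\<lambda>i. if i < m then E i * (\<Prod>j<i. 1 - E j) else (\<Prod>j<m. 1 - E j))"
  have "E j * E j = E j" if "j < m" for j using E that by simp
  note f = complete_orthogonal_idempotents[OF this f_def]
  have "g (f i) = indicator {l i}" if "i \<le> m" for i
    using g_orthogonalised[OF l _ f_def that] E by blast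
  then show thesis
  proof (intro that[of f])
    show "(\<Sum>i<card Lam. f i) = 1" using f(3) m by (simp add: lessThan_Suc_atMost)
  qed (use f(1,2) m in \<open>auto simp: less_Suc_eq_le\<close>)
qed

end

theorem lemma3p9:
  fixes phi :: "'k::field \<Rightarrow> 'a::comm_ring_1" and n :: nat
  assumes "ring_hom_K phi"
    and "in_RK phi (UNIV :: 'a set) 1"
    and "top_dim phi (UNIV :: 'a set) n"
  shows "\<exists>e :: nat \<Rightarrow> 'a.
     (\<forall>i<n. e i * e i = e i) \<and>
     (\<forall>i<n. \<forall>j<n. i \<noteq> j \<longrightarrow> e i * e j = 0) \<and>
     (\<Sum>i<n. e i) = 1 \<and>
     (\<forall>i<n. in_RK phi (range (\<lambda>x. e i * x)) (e i) \<and>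
            top_dim phi (range (\<lambda>x. e i * x)) 1 \<and>
            same_loewy_length (UNIV :: 'a set) (range (\<lambda>x. e i * x)))"
proof -
  from assms(3) obtain I0 Lam where I0: "I0 \<in> socle_ideals UNIV" "I0 \<noteq> UNIV" "soc_succ UNIV I0 = UNIV"
    and Lam: "finite Lam" "card Lam = n" and "layer_iso phi I0 UNIV Lam"
    unfolding top_dim_def by blast
  then obtain g where "top_layer_coordinates phi I0 g Lam"
    using assms(2) unfolding layer_iso_def top_layer_coordinates_def by blast
  then interpret top_layer_coordinates phi I0 g Lam .
  obtain e where "\<And>i. i < n \<Longrightarrow> e i * e i = e i"
    "\<And>i j. i < n \<Longrightarrow> j < n \<Longrightarrow> i \<noteq> j \<Longrightarrow> e i * e j = 0"
    "(\<Sum>i<n. e i) = 1" "\<And>i. i < n \<Longrightarrow> \<exists>\<mu>. g (e i) = indicator {\<mu>}"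
    using block_decomposition Lam(2) by metis
  then show ?thesis using corner_block by metis
qed

end
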